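(* Let $U\in\mathbb{R}^{n\times a}$ and $\Pi\in\mathbb{R}^{n\times b}$ be such that the concatenation $[U\,|\,\Pi]$ has orthonormal columns, let $\alpha\in[0,1/7]$, and let $S\in\mathbb{R}^{k\times n}$ be an $\alpha$-distortion subspace embedding for $[U\,|\,\Pi]$. Let $M\in\mathbb{R}^{k\times k}$ be symmetric, let $P$ be the orthogonal projection onto the column space of $SU$, and $P^\perp=I-P$. Then for every nonzero $x\in\mathbb{R}^b$, $P^\perp S\Pi x\ne0$ and $$\left|\frac{(P^\perp S\Pi x)^TM(P^\perp S\Pi x)}{\|P^\perp S\Pi x\|^2}-\frac{(S\Pi x)^TM(S\Pi x)}{\|S\Pi x\|^2}\right|\le10\alpha\|M\|.$$
   Context: $S$ is an $\alpha$-distortion subspace embedding for $X\in\mathbb{R}^{n\times m}$ if $(1-\alpha)\|Xv\|^2\le\|SXv\|^2\le(1+\alpha)\|Xv\|^2$ for all $v\in\mathbb{R}^m$. $\|M\|$ is the operator norm. *)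

theory Defs
  imports "HOL-Analysis.Analysis"
begin

definition hcat :: "real^'a^'n \<Rightarrow> real^'b^'n \<Rightarrow> real^('a + 'b)^'n" where
  "hcat U V = (\<chi> i j. case j of Inl p \<Rightarrow> U $ i $ p | Inr q \<Rightarrow> V $ i $ q)"

definition orthonormal_columns :: "real^'m^'n \<Rightarrow> bool" where
  "orthonormal_columns X \<longleftrightarrow> transpose X ** X = mat 1"

definition subspace_embedding :: "real \<Rightarrow> real^'n^'k \<Rightarrow> real^'m^'n \<Rightarrow> bool" where
  "subspace_embedding \<alpha> S X \<longleftrightarrow>
     (\<forall>v. (1 - \<alpha>) * (norm (X *v v))\<^sup>2 \<le> (norm (S *v (X *v v)))\<^sup>2 \<and>
          (norm (S *v (X *v v)))\<^sup>2 \<le> (1 + \<alpha>) * (norm (X *v v))\<^sup>2)"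

definition col_space :: "real^'m^'n \<Rightarrow> (real^'n) set" where
  "col_space A = range (\<lambda>v. A *v v)"

definition orth_proj :: "(real^'n) set \<Rightarrow> real^'n \<Rightarrow> real^'n" where
  "orth_proj W x = (THE p. p \<in> W \<and> (\<forall>w\<in>W. (x - p) \<bullet> w = 0))"

definition op_norm :: "real^'m^'n \<Rightarrow> real" where
  "op_norm A = onorm (\<lambda>v. A *v v)"

end

theory Submission
  imports Defs
begin

(* Write y = S \<Pi> x and p = P y, so that p = S a for some a in the column space of U.
  Since a \<perp> \<Pi> x, a polarization argument shows that S nearly preserves their orthogonality:
  \<bar>\<langle>S a, S \<Pi> x\<rangle>\<bar> \<le> \<alpha> \<parallel>a\<parallel> \<parallel>\<Pi> x\<parallel>. As \<langle>S a, S \<Pi> x\<rangle> = \<langle>p, y\<rangle> = \<parallel>p\<parallel>^2, this gives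
  (1 - \<alpha>) \<parallel>p\<parallel> \<le> \<alpha> \<parallel>y\<parallel>, i.e. P\<^sup>\<perp> y = y - p is a small relative perturbation of y.
  The Rayleigh quotient of M is Lipschitz on the unit sphere with constant 2 \<parallel>M\<parallel>, and
  normalization at most doubles relative errors, which yields the bound. *)

definition vec_inl :: "real^'a \<Rightarrow> real^('a + 'b::finite)" where
  "vec_inl c = (\<chi> j. case j of Inl p \<Rightarrow> c $ p | Inr _ \<Rightarrow> 0)"

definition vec_inr :: "real^'b \<Rightarrow> real^('a::finite + 'b)" where
  "vec_inr d = (\<chi> j. case j of Inl _ \<Rightarrow> 0 | Inr q \<Rightarrow> d $ q)"

lemma sum_UNIV_Plus:
  "sum f (UNIV :: ('a::finite + 'b::finite) set) = sum (f \<circ> Inl) UNIV + sum (f \<circ> Inr) UNIV"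
  using sum.Plus[of "UNIV :: 'a set" "UNIV :: 'b set" f] by simp

lemma hcat_mult_vec_inl: "hcat U V *v vec_inl c = U *v c"
  by (simp add: vec_eq_iff matrix_vector_mult_def hcat_def vec_inl_def sum_UNIV_Plus o_def)

lemma hcat_mult_vec_inr: "hcat U V *v vec_inr d = V *v d"
  by (simp add: vec_eq_iff matrix_vector_mult_def hcat_def vec_inr_def sum_UNIV_Plus o_def)

lemma inner_vec_inl_vec_inr: "vec_inl c \<bullet> vec_inr d = 0"
  by (simp add: inner_vec_def vec_inl_def vec_inr_def sum_UNIV_Plus o_def)

lemma inner_vec_inr: "vec_inr c \<bullet> vec_inr d = c \<bullet> d"
  by (simp add: inner_vec_def vec_inr_def sum_UNIV_Plus o_def)

lemma orthonormal_columns_inner: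
  assumes "orthonormal_columns H"
  shows "(H *v u) \<bullet> (H *v v) = u \<bullet> v"
proof -
  have "(H *v u) \<bullet> (H *v v) = ((H *v u) v* H) \<bullet> v"
    by (rule dot_lmul_matrix[symmetric])
  also have "(H *v u) v* H = transpose H *v (H *v u)"
    by simp
  also have "transpose H *v (H *v u) = u"
    using assms by (simp add: orthonormal_columns_def matrix_vector_mul_assoc)
  finally show ?thesis .
qed

lemma orthonormal_columns_hcat_orthogonal:
  assumes "orthonormal_columns (hcat U V)"
  shows "(U *v c) \<bullet> (V *v d) = 0"
  using orthonormal_columns_inner[OF assms, of "vec_inl c" "vec_inr d"]
  by (simp add: hcat_mult_vec_inl hcat_mult_vec_inr inner_vec_inl_vec_inr)

lemma orthonormal_columns_hcat_norm_right:
  assumes "orthonormal_columns (hcat U V)"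
  shows "norm (V *v d) = norm d"
  using orthonormal_columns_inner[OF assms, of "vec_inr d" "vec_inr d"]
  by (simp add: hcat_mult_vec_inr inner_vec_inr norm_eq_sqrt_inner)

lemma subspace_col_space: "subspace (col_space A)"
  unfolding col_space_def
  by (rule linear_subspace_image[OF matrix_vector_mul_linear subspace_UNIV])

lemma col_space_mult: "col_space (A ** B) = (\<lambda>v. A *v v) ` col_space B"
  by (auto simp: col_space_def matrix_vector_mul_assoc[symmetric])

lemma col_space_hcat_left: "col_space U \<subseteq> col_space (hcat U V)"
  unfolding col_space_def by (metis hcat_mult_vec_inl image_subsetI rangeE rangeI)

lemma hcat_right_in_col_space: "V *v d \<in> col_space (hcat U V)"
  unfolding col_space_def by (metis hcat_mult_vec_inr rangeI)

lemma orth_proj: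
  assumes "subspace W"
  shows orth_proj_in: "orth_proj W x \<in> W"
    and orth_proj_orthogonal: "w \<in> W \<Longrightarrow> (x - orth_proj W x) \<bullet> w = 0"
proof -
  obtain p q where p: "p \<in> span W" and q: "\<And>w. w \<in> span W \<Longrightarrow> orthogonal q w"
    and x: "x = p + q"
    using orthogonal_subspace_decomp_exists[of W x] by metis
  have "span W = W"
    using assms by (simp add: span_eq_iff)
  then have P: "p \<in> W \<and> (\<forall>w\<in>W. (x - p) \<bullet> w = 0)"
    using p q x by (metis add_diff_cancel_left' orthogonal_def)
  have "orth_proj W x = p"
    unfolding orth_proj_def
  proof (rule the_equality)
    fix p' assume p': "p' \<in> W \<and> (\<forall>w\<in>W. (x - p') \<bullet> w = 0)"
    then have "p' - p \<in> W"
      using P assms by (simp add: subspace_diff)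
    then have "(x - p') \<bullet> (p' - p) = 0" "(x - p) \<bullet> (p' - p) = 0"
      using p' P by auto
    then have "(p' - p) \<bullet> (p' - p) = 0"
      by (simp add: inner_diff_left)
    then show "p' = p" by simp
  qed (rule P)
  then show "orth_proj W x \<in> W" "w \<in> W \<Longrightarrow> (x - orth_proj W x) \<bullet> w = 0"
    using P by auto
qed

lemma subspace_embedding_col_space:
  assumes "subspace_embedding \<alpha> S X" and "h \<in> col_space X"
  shows "(1 - \<alpha>) * (norm h)\<^sup>2 \<le> (norm (S *v h))\<^sup>2"
    and "(norm (S *v h))\<^sup>2 \<le> (1 + \<alpha>) * (norm h)\<^sup>2"
  using assms by (auto simp: subspace_embedding_def col_space_def)

lemma subspace_embedding_norm_ge:
  assumes "subspace_embedding \<alpha> S X" and "h \<in> col_space X"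
  shows "sqrt (1 - \<alpha>) * norm h \<le> norm (S *v h)"
  using real_sqrt_le_mono[OF subspace_embedding_col_space(1)[OF assms]]
  by (simp add: real_sqrt_mult)

lemma subspace_embedding_polarization:
  assumes emb: "subspace_embedding \<alpha> S X"
    and u: "u \<in> col_space X" and v: "v \<in> col_space X" and uv: "u \<bullet> v = 0"
  shows "2 * ((S *v u) \<bullet> (S *v v)) \<le> \<alpha> * ((norm u)\<^sup>2 + (norm v)\<^sup>2)"
proof -
  have "u + v \<in> col_space X" "u - v \<in> col_space X"
    using u v subspace_col_space by (auto intro: subspace_add subspace_diff)
  moreover have "(norm (u + v))\<^sup>2 = (norm u)\<^sup>2 + (norm v)\<^sup>2"
    "(norm (u - v))\<^sup>2 = (norm u)\<^sup>2 + (norm v)\<^sup>2"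
    using uv by (simp_all add: power2_norm_eq_inner inner_add inner_diff inner_commute)
  moreover have "(norm (S *v (u + v)))\<^sup>2 - (norm (S *v (u - v)))\<^sup>2 = 4 * ((S *v u) \<bullet> (S *v v))"
    by (simp add: power2_norm_eq_inner matrix_vector_right_distrib matrix_vector_mult_diff_distrib
        inner_add inner_diff inner_commute)
  ultimately show ?thesis
    using subspace_embedding_col_space[OF emb, of "u + v"] subspace_embedding_col_space[OF emb, of "u - v"]
    by (simp add: algebra_simps)
qed

text \<open>Near-orthogonality: rescaling u and v to equal lengths turns the arithmetic mean
  in the polarization bound into the geometric mean.\<close>
lemma subspace_embedding_inner_le:
  assumes emb: "subspace_embedding \<alpha> S X"
    and u: "u \<in> col_space X" and v: "v \<in> col_space X" and uv: "u \<bullet> v = 0"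
  shows "\<bar>(S *v u) \<bullet> (S *v v)\<bar> \<le> \<alpha> * norm u * norm v"
proof (cases "u = 0 \<or> v = 0")
  case True
  then show ?thesis by auto
next
  case False
  then have pos: "norm u * norm v > 0" by simp
  have bound: "2 * a * b * ((S *v u) \<bullet> (S *v v)) \<le> \<alpha> * (a\<^sup>2 * (norm u)\<^sup>2 + b\<^sup>2 * (norm v)\<^sup>2)"
    for a b
  proof -
    have "2 * a * b * ((S *v u) \<bullet> (S *v v)) = 2 * ((S *v (a *\<^sub>R u)) \<bullet> (S *v (b *\<^sub>R v)))"
      by (simp add: matrix_vector_mult_scaleR)
    also have "\<dots> \<le> \<alpha> * ((norm (a *\<^sub>R u))\<^sup>2 + (norm (b *\<^sub>R v))\<^sup>2)"
      by (rule subspace_embedding_polarization[OF emb subspace_scale[OF subspace_col_space u]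
          subspace_scale[OF subspace_col_space v]]) (simp add: uv)
    also have "\<dots> = \<alpha> * (a\<^sup>2 * (norm u)\<^sup>2 + b\<^sup>2 * (norm v)\<^sup>2)"
      by (simp add: power_mult_distrib)
    finally show ?thesis .
  qed
  define c where "c = (S *v u) \<bullet> (S *v v)"
  have "norm u * norm v * c \<le> norm u * norm v * (\<alpha> * norm u * norm v)"
    using bound[of "norm v" "norm u"] unfolding c_def[symmetric] by (simp add: power2_eq_square mult_ac)
  moreover have "norm u * norm v * (- c) \<le> norm u * norm v * (\<alpha> * norm u * norm v)"
    using bound[of "norm v" "- norm u"] unfolding c_def[symmetric] by (simp add: power2_eq_square mult_ac)
  ultimately show ?thesis
    unfolding c_def[symmetric] using pos by (simp only: mult_le_cancel_left_pos abs_le_iff)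
qed

lemma subspace_embedding_orth_proj_le:
  fixes U :: "real^'a^'n" and X :: "real^'m^'n" and S :: "real^'n^'k"
  assumes emb: "subspace_embedding \<alpha> S X" and "0 \<le> \<alpha>" "\<alpha> \<le> 1"
    and U: "col_space U \<subseteq> col_space X" and w: "w \<in> col_space X"
    and orth: "\<And>u. u \<in> col_space U \<Longrightarrow> u \<bullet> w = 0"
  shows "(1 - \<alpha>) * norm (orth_proj (col_space (S ** U)) (S *v w)) \<le> \<alpha> * norm (S *v w)"
proof -
  define y where "y = S *v w"
  define p where "p = orth_proj (col_space (S ** U)) y"
  have "p \<in> (\<lambda>v. S *v v) ` col_space U"
    unfolding p_def col_space_mult[symmetric] by (rule orth_proj_in[OF subspace_col_space])
  then obtain a where a: "a \<in> col_space U" and p: "p = S *v a"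
    by blast
  have "(y - p) \<bullet> p = 0"
    unfolding p_def by (rule orth_proj_orthogonal[OF subspace_col_space orth_proj_in[OF subspace_col_space]])
  then have "(norm p)\<^sup>2 = (S *v a) \<bullet> (S *v w)"
    by (simp add: power2_norm_eq_inner inner_diff_right inner_commute flip: p y_def)
  also have "\<dots> \<le> \<alpha> * norm a * norm w"
    using subspace_embedding_inner_le[OF emb _ w orth[OF a]] a U by auto
  finally have p_sq: "(norm p)\<^sup>2 \<le> \<alpha> * norm a * norm w" .
  have a_le: "sqrt (1 - \<alpha>) * norm a \<le> norm p"
    using subspace_embedding_norm_ge[OF emb, of a] a U p by auto
  have w_le: "sqrt (1 - \<alpha>) * norm w \<le> norm y"
    using subspace_embedding_norm_ge[OF emb w] y_def by simp
  have "norm p * ((1 - \<alpha>) * norm p) = (1 - \<alpha>) * (norm p)\<^sup>2"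
    by (simp add: power2_eq_square)
  also have "\<dots> \<le> (1 - \<alpha>) * (\<alpha> * norm a * norm w)"
    using p_sq \<open>\<alpha> \<le> 1\<close> by (simp add: mult_left_mono)
  also have "\<dots> = \<alpha> * ((sqrt (1 - \<alpha>) * norm a) * (sqrt (1 - \<alpha>) * norm w))"
    using \<open>\<alpha> \<le> 1\<close> by (simp add: algebra_simps)
  also have "\<dots> \<le> \<alpha> * (norm p * norm y)"
    using a_le w_le \<open>0 \<le> \<alpha>\<close> \<open>\<alpha> \<le> 1\<close> by (intro mult_left_mono mult_mono) auto
  finally have "norm p * ((1 - \<alpha>) * norm p) \<le> norm p * (\<alpha> * norm y)"
    by (simp add: mult_ac)
  then show ?thesis
    unfolding y_def[symmetric] p_def[symmetric] using \<open>0 \<le> \<alpha>\<close> by (cases "norm p = 0") auto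
qed

lemma subspace_embedding_hcat_orth_proj_le:
  assumes "orthonormal_columns (hcat U V)" and "subspace_embedding \<alpha> S (hcat U V)"
    and "0 \<le> \<alpha>" "\<alpha> \<le> 1"
  shows "(1 - \<alpha>) * norm (orth_proj (col_space (S ** U)) (S *v (V *v d))) \<le> \<alpha> * norm (S *v (V *v d))"
  using subspace_embedding_orth_proj_le[OF assms(2-4) col_space_hcat_left hcat_right_in_col_space]
    orthonormal_columns_hcat_orthogonal[OF assms(1)]
  by (force simp: col_space_def)

lemma norm_sgn_diff_le:
  fixes z y :: "'a::real_normed_vector"
  assumes "y \<noteq> 0"
  shows "norm (sgn z - sgn y) \<le> 2 * norm (z - y) / norm y"
proof (cases "z = 0")
  case True
  then show ?thesis
    using assms by (simp add: norm_sgn)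
next
  case False
  have ny: "norm y > 0"
    using assms by simp
  have "sgn z - sgn y = (inverse (norm z) - inverse (norm y)) *\<^sub>R z + inverse (norm y) *\<^sub>R (z - y)"
    by (simp add: sgn_div_norm algebra_simps)
  then have "norm (sgn z - sgn y)
      \<le> norm ((inverse (norm z) - inverse (norm y)) *\<^sub>R z) + norm (inverse (norm y) *\<^sub>R (z - y))"
    by (metis norm_triangle_ineq)
  also have "norm ((inverse (norm z) - inverse (norm y)) *\<^sub>R z) = \<bar>norm y - norm z\<bar> / norm y"
    using False ny by (simp add: field_simps abs_div)
  also have "\<dots> \<le> norm (z - y) / norm y"
    using ny by (intro divide_right_mono) (auto simp: norm_minus_commute intro: norm_triangle_ineq3 order.trans)
  also have "norm (inverse (norm y) *\<^sub>R (z - y)) = norm (z - y) / norm y"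
    by (simp add: divide_inverse_commute)
  finally show ?thesis
    by simp
qed

lemma nonzero_if_norm_diff_le:
  assumes "y \<noteq> 0" and "norm (z - y) \<le> d * norm y" and "d < 1"
  shows "z \<noteq> 0"
  using assms by auto

lemma op_norm_nonneg: "0 \<le> op_norm M"
  unfolding op_norm_def by (rule onorm_pos_le[OF matrix_vector_mul_bounded_linear])

lemma norm_matrix_vector_le_op_norm: "norm (M *v v) \<le> op_norm M * norm v"
  unfolding op_norm_def by (rule onorm[OF matrix_vector_mul_bounded_linear])

lemma abs_inner_matrix_vector_le: "\<bar>u \<bullet> (M *v v)\<bar> \<le> op_norm M * norm u * norm v"
proof -
  have "\<bar>u \<bullet> (M *v v)\<bar> \<le> norm u * norm (M *v v)"
    by (rule Cauchy_Schwarz_ineq2)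
  also have "\<dots> \<le> norm u * (op_norm M * norm v)"
    by (rule mult_left_mono[OF norm_matrix_vector_le_op_norm norm_ge_zero])
  finally show ?thesis
    by (simp add: mult_ac)
qed

lemma quadratic_form_diff_le:
  "\<bar>u \<bullet> (M *v u) - v \<bullet> (M *v v)\<bar> \<le> op_norm M * (norm u + norm v) * norm (u - v)"
proof -
  have "u \<bullet> (M *v u) - v \<bullet> (M *v v) = u \<bullet> (M *v (u - v)) + (u - v) \<bullet> (M *v v)"
    by (simp add: matrix_vector_mult_diff_distrib inner_diff_left inner_diff_right)
  then show ?thesis
    using abs_inner_matrix_vector_le[of u M "u - v"] abs_inner_matrix_vector_le[of "u - v" M v]
    by (simp add: algebra_simps)
qed

lemma rayleigh_quotient_sgn:
  fixes M :: "real^'n^'n"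
  shows "x \<bullet> (M *v x) / (norm x)\<^sup>2 = sgn x \<bullet> (M *v sgn x)"
  by (simp add: sgn_div_norm matrix_vector_mult_scaleR power2_eq_square field_simps)

lemma rayleigh_quotient_diff_le:
  fixes M :: "real^'n^'n"
  assumes "y \<noteq> 0" and "norm (z - y) \<le> d * norm y"
  shows "\<bar>z \<bullet> (M *v z) / (norm z)\<^sup>2 - y \<bullet> (M *v y) / (norm y)\<^sup>2\<bar> \<le> 4 * d * op_norm M"
proof -
  have "2 * norm (z - y) / norm y \<le> 2 * d"
    using assms by (simp add: pos_divide_le_eq)
  then have "norm (sgn z - sgn y) \<le> 2 * d"
    using norm_sgn_diff_le[OF assms(1), of z] by linarith
  moreover have "norm (sgn z) + norm (sgn y) \<le> 2"
    by (simp add: norm_sgn)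
  ultimately have "op_norm M * (norm (sgn z) + norm (sgn y)) * norm (sgn z - sgn y) \<le> op_norm M * 2 * (2 * d)"
    using op_norm_nonneg[of M] by (intro mult_mono mult_left_mono) auto
  then have "\<bar>sgn z \<bullet> (M *v sgn z) - sgn y \<bullet> (M *v sgn y)\<bar> \<le> 4 * d * op_norm M"
    using quadratic_form_diff_le[of "sgn z" M "sgn y"] by (simp add: mult_ac)
  then show ?thesis
    by (simp add: rayleigh_quotient_sgn)
qed

theorem mainTheorem13:
  fixes U :: "real^'a^'n" and Pi :: "real^'b^'n" and S :: "real^'n^'k"
    and M :: "real^'k^'k" and \<alpha> :: real
  assumes "orthonormal_columns (hcat U Pi)"
    and "0 \<le> \<alpha>" and "\<alpha> \<le> 1/7"
    and "subspace_embedding \<alpha> S (hcat U Pi)"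
    and "transpose M = M"
  shows "\<forall>x::real^'b. x \<noteq> 0 \<longrightarrow>
     (let y = S *v (Pi *v x); z = y - orth_proj (col_space (S ** U)) y in
        z \<noteq> 0 \<and>
        \<bar>(z \<bullet> (M *v z)) / (norm z)\<^sup>2 - (y \<bullet> (M *v y)) / (norm y)\<^sup>2\<bar>
          \<le> 10 * \<alpha> * op_norm M)"
proof (intro allI impI)
  fix x :: "real^'b"
  assume "x \<noteq> 0"
  define y where "y = S *v (Pi *v x)"
  define z where "z = y - orth_proj (col_space (S ** U)) y"
  have "sqrt (1 - \<alpha>) * norm x \<le> norm y"
    using subspace_embedding_norm_ge[OF assms(4) hcat_right_in_col_space]
    by (simp add: y_def orthonormal_columns_hcat_norm_right[OF assms(1)])
  moreover have "0 < sqrt (1 - \<alpha>) * norm x"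
    using \<open>x \<noteq> 0\<close> \<open>\<alpha> \<le> 1/7\<close> by simp
  ultimately have "y \<noteq> 0"
    by auto
  have "(1 - \<alpha>) * norm (z - y) \<le> \<alpha> * norm y"
    using subspace_embedding_hcat_orth_proj_le[OF assms(1,4,2)] \<open>\<alpha> \<le> 1/7\<close>
    by (simp add: z_def y_def)
  moreover have "6/7 * norm (z - y) \<le> (1 - \<alpha>) * norm (z - y)"
    using \<open>\<alpha> \<le> 1/7\<close> by (intro mult_right_mono) auto
  ultimately have close: "norm (z - y) \<le> 7/6 * \<alpha> * norm y"
    by linarith
  then have "z \<noteq> 0"
    using \<open>y \<noteq> 0\<close> \<open>\<alpha> \<le> 1/7\<close> nonzero_if_norm_diff_le by fastforce
  moreover have "\<bar>z \<bullet> (M *v z) / (norm z)\<^sup>2 - y \<bullet> (M *v y) / (norm y)\<^sup>2\<bar> \<le> 4 * (7/6 * \<alpha>) * op_norm M"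
    by (rule rayleigh_quotient_diff_le[OF \<open>y \<noteq> 0\<close> close])
  moreover have "4 * (7/6 * \<alpha>) * op_norm M \<le> 10 * \<alpha> * op_norm M"
    using \<open>0 \<le> \<alpha>\<close> op_norm_nonneg[of M] by (intro mult_right_mono) auto
  ultimately show "let y = S *v (Pi *v x); z = y - orth_proj (col_space (S ** U)) y in
      z \<noteq> 0 \<and> \<bar>z \<bullet> (M *v z) / (norm z)\<^sup>2 - y \<bullet> (M *v y) / (norm y)\<^sup>2\<bar> \<le> 10 * \<alpha> * op_norm M"
    unfolding Let_def y_def[symmetric] z_def[symmetric] by linarith
qed

end
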